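(* Let $\delta\in\{1,-1\}$ and let $\alpha,\beta,\gamma\in\mathbb{Z}[i]$ satisfy $\alpha^2+(1+\delta i)\beta^2+\gamma^2=0$, $\alpha\beta\gamma\neq0$ and $\gcd(\alpha,\beta,\gamma)\in U$. Then $\beta\equiv0\pmod{(1+i)^2}$.
   Context: $\mathbb{Z}[i]$ is the ring of Gaussian integers, $U=\{1,-1,i,-i\}$ its unit group; $\gcd(\alpha,\beta,\gamma)\in U$ means no common non-unit divisor. *)

theory Defs
  imports Complex_Main
begin

definition gauss_ints :: "complex set" where
  "gauss_ints = {z. Re z \<in> \<int> \<and> Im z \<in> \<int>}"

definition gdvd :: "complex \<Rightarrow> complex \<Rightarrow> bool" where
  "gdvd a b \<longleftrightarrow> (\<exists>k\<in>gauss_ints. b = a * k)"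

definition gunits :: "complex set" where
  "gunits = {1, -1, \<i>, -\<i>}"

text \<open>gcd(a,b,c) in U: every common divisor in Z[i] is a unit.\<close>
definition gcd3_unit :: "complex \<Rightarrow> complex \<Rightarrow> complex \<Rightarrow> bool" where
  "gcd3_unit a b c \<longleftrightarrow>
     (\<forall>d\<in>gauss_ints. gdvd d a \<and> gdvd d b \<and> gdvd d c \<longrightarrow> d \<in> gunits)"

end

theory Submission
  imports Defs
begin

text \<open>Write \<beta> = c + d\<i>. The imaginary part of the equation gives c = d (mod 2). If both were
  odd, then 8 divides c^2 - d^2, so halving the imaginary part shows that the components of \<alpha> or
  those of \<gamma> are both odd, whose squares then also differ by a multiple of 8. The real part then
  says that the squares of the other pair of components differ by 2 (mod 4), which is impossible
  since squares are 0 or 1 mod 4. Hence c and d are even, i.e. (1 + \<i>)^2 = 2\<i> divides \<beta>.\<close>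

lemma square_mod_4: "(x::int)\<^sup>2 mod 4 \<in> {0, 1}"
proof (cases "even x")
  case True
  then obtain p where "x = 2 * p" by blast
  then show ?thesis by (simp add: power2_eq_square)
next
  case False
  then obtain p where p: "x = 2 * p + 1" using oddE by blast
  define q where "q = p * p + p"
  have "x\<^sup>2 = 4 * q + 1" unfolding p q_def by (simp add: power2_eq_square algebra_simps)
  then show ?thesis by simp
qed

lemma square_diff_mod_4_neq_2: "((x::int)\<^sup>2 - y\<^sup>2) mod 4 \<noteq> 2"
proof -
  have "((x::int)\<^sup>2 - y\<^sup>2) mod 4 = (x\<^sup>2 mod 4 - y\<^sup>2 mod 4) mod 4"
    by (simp add: mod_diff_eq)
  then show ?thesis using square_mod_4[of x] square_mod_4[of y] by auto
qed

lemma odd_square_minus_1_dvd_8: "odd (x::int) \<Longrightarrow> 8 dvd x\<^sup>2 - 1"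
proof -
  assume "odd x"
  then obtain p where p: "x = 2 * p + 1" using oddE by blast
  have "even (p * p + p)" by simp
  then obtain q where q: "p * p + p = 2 * q" by blast
  have "x\<^sup>2 - 1 = 8 * q" unfolding p using q by (simp add: power2_eq_square algebra_simps)
  then show ?thesis by simp
qed

lemma odd_square_diff_dvd_8: "odd (x::int) \<Longrightarrow> odd y \<Longrightarrow> 8 dvd x\<^sup>2 - y\<^sup>2"
proof -
  assume "odd x" "odd y"
  then have "8 dvd (x\<^sup>2 - 1) - (y\<^sup>2 - 1)"
    using odd_square_minus_1_dvd_8 by (blast intro: dvd_diff)
  then show ?thesis by simp
qed

lemma mod_4_eq_2_if_add_eq:
  fixes x y m k :: int
  assumes "8 dvd x" "odd m" "x + y = 2 * m - 8 * k"
  shows "y mod 4 = 2"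
  using assms by presburger

lemma even_components_of_conic_solution:
  fixes a b c d e f \<delta> :: int
  assumes "odd \<delta>"
    and re: "(a\<^sup>2 - b\<^sup>2) + (c\<^sup>2 - d\<^sup>2) - 2 * \<delta> * c * d + (e\<^sup>2 - f\<^sup>2) = 0"
    and im: "2 * a * b + 2 * c * d + \<delta> * (c\<^sup>2 - d\<^sup>2) + 2 * e * f = 0"
  shows "even c \<and> even d"
proof -
  have "\<delta> * (c\<^sup>2 - d\<^sup>2) = 2 * (- a * b - c * d - e * f)"
    using im by (simp add: algebra_simps)
  then have "even (c\<^sup>2 - d\<^sup>2)" using \<open>odd \<delta>\<close> by (metis dvd_triv_left even_mult_iff)
  then have same_parity: "even c \<longleftrightarrow> even d" by auto
  have "\<not> (odd c \<and> odd d)"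
  proof
    assume "odd c \<and> odd d"
    then have odd_cd: "odd (\<delta> * c * d)" using \<open>odd \<delta>\<close> by simp
    obtain k where k: "c\<^sup>2 - d\<^sup>2 = 8 * k"
      using odd_square_diff_dvd_8 \<open>odd c \<and> odd d\<close> by blast
    have "a * b + e * f = - c * d - 4 * \<delta> * k"
      using im k by (simp add: algebra_simps)
    then have "odd (a * b + e * f)" using \<open>odd c \<and> odd d\<close> by simp
    then have "odd (a * b) \<or> odd (e * f)" by auto
    then have "8 dvd a\<^sup>2 - b\<^sup>2 \<or> 8 dvd e\<^sup>2 - f\<^sup>2"
      using odd_square_diff_dvd_8 by auto
    moreover have "(a\<^sup>2 - b\<^sup>2) + (e\<^sup>2 - f\<^sup>2) = 2 * (\<delta> * c * d) - 8 * k"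
      and "(e\<^sup>2 - f\<^sup>2) + (a\<^sup>2 - b\<^sup>2) = 2 * (\<delta> * c * d) - 8 * k"
      using re k by (simp_all add: algebra_simps)
    ultimately have "(e\<^sup>2 - f\<^sup>2) mod 4 = 2 \<or> (a\<^sup>2 - b\<^sup>2) mod 4 = 2"
      using mod_4_eq_2_if_add_eq odd_cd by blast
    then show False using square_diff_mod_4_neq_2 by blast
  qed
  with same_parity show ?thesis by blast
qed

lemma gauss_ints_cases:
  assumes "z \<in> gauss_ints"
  obtains x y :: int where "z = Complex (of_int x) (of_int y)"
proof -
  from assms obtain x y where "Re z = of_int x" "Im z = of_int y"
    unfolding gauss_ints_def by (auto elim!: Ints_cases)
  then show ?thesis using that[of x y] by (simp add: complex_eq_iff)
qed

lemma conic_equation_components: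
  fixes a b c d e f \<delta> :: int
  defines "\<alpha> \<equiv> Complex (of_int a) (of_int b)" and "\<beta> \<equiv> Complex (of_int c) (of_int d)"
    and "\<gamma> \<equiv> Complex (of_int e) (of_int f)"
  assumes "\<alpha>\<^sup>2 + (1 + of_int \<delta> * \<i>) * \<beta>\<^sup>2 + \<gamma>\<^sup>2 = 0"
  shows "(a\<^sup>2 - b\<^sup>2) + (c\<^sup>2 - d\<^sup>2) - 2 * \<delta> * c * d + (e\<^sup>2 - f\<^sup>2) = 0"
    and "2 * a * b + 2 * c * d + \<delta> * (c\<^sup>2 - d\<^sup>2) + 2 * e * f = 0"
proof -
  from assms have "Re (\<alpha>\<^sup>2 + (1 + of_int \<delta> * \<i>) * \<beta>\<^sup>2 + \<gamma>\<^sup>2) = 0"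
    and "Im (\<alpha>\<^sup>2 + (1 + of_int \<delta> * \<i>) * \<beta>\<^sup>2 + \<gamma>\<^sup>2) = 0"
    by simp_all
  then have "real_of_int ((a\<^sup>2 - b\<^sup>2) + (c\<^sup>2 - d\<^sup>2) - 2 * \<delta> * c * d + (e\<^sup>2 - f\<^sup>2)) = 0"
    and "real_of_int (2 * a * b + 2 * c * d + \<delta> * (c\<^sup>2 - d\<^sup>2) + 2 * e * f) = 0"
    unfolding \<alpha>_def \<beta>_def \<gamma>_def by (simp_all add: power2_eq_square algebra_simps)
  then show "(a\<^sup>2 - b\<^sup>2) + (c\<^sup>2 - d\<^sup>2) - 2 * \<delta> * c * d + (e\<^sup>2 - f\<^sup>2) = 0"
    and "2 * a * b + 2 * c * d + \<delta> * (c\<^sup>2 - d\<^sup>2) + 2 * e * f = 0"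
    by (simp_all only: of_int_eq_0_iff)
qed

lemma gdvd_square_one_plus_i:
  fixes c d :: int
  assumes "even c" "even d"
  shows "gdvd ((1 + \<i>)\<^sup>2) (Complex c d)"
proof -
  from assms obtain c' d' where "c = 2 * c'" "d = 2 * d'" by (auto elim!: evenE)
  then have "Complex c d = (1 + \<i>)\<^sup>2 * Complex d' (- c')"
    by (simp add: complex_eq_iff power2_eq_square)
  moreover have "Complex d' (- c') \<in> gauss_ints" unfolding gauss_ints_def by simp
  ultimately show ?thesis unfolding gdvd_def by blast
qed

theorem lemma4p12:
  fixes \<delta> :: int and \<alpha> \<beta> \<gamma> :: complex
  assumes "\<delta> \<in> {1, -1}"
    and "\<alpha> \<in> gauss_ints" and "\<beta> \<in> gauss_ints" and "\<gamma> \<in> gauss_ints"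
    and "\<alpha>\<^sup>2 + (1 + of_int \<delta> * \<i>) * \<beta>\<^sup>2 + \<gamma>\<^sup>2 = 0"
    and "\<alpha> * \<beta> * \<gamma> \<noteq> 0"
    and "gcd3_unit \<alpha> \<beta> \<gamma>"
  shows "gdvd ((1 + \<i>)\<^sup>2) \<beta>"
proof -
  obtain a b where \<alpha>: "\<alpha> = Complex (of_int a) (of_int b)" using gauss_ints_cases[OF assms(2)] .
  obtain c d where \<beta>: "\<beta> = Complex (of_int c) (of_int d)" using gauss_ints_cases[OF assms(3)] .
  obtain e f where \<gamma>: "\<gamma> = Complex (of_int e) (of_int f)" using gauss_ints_cases[OF assms(4)] .
  have "odd \<delta>" using assms(1) by auto
  with conic_equation_components[OF assms(5)[unfolded \<alpha> \<beta> \<gamma>]] have "even c \<and> even d"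
    using even_components_of_conic_solution by blast
  then show ?thesis unfolding \<beta> by (simp add: gdvd_square_one_plus_i)
qed

end
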